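(* Let $p$ be a prime, $n\ge1$, $d\ge2$, and ${\bf a}_1,\dots,{\bf a}_N\in\mathbb{N}^{n+1}$ with coordinate sums $d$. If $u,v\in U_{\min}$, $\nu\in\mathbb{N}^N$, and $\sum_{j=1}^N\nu_j{\bf a}_j^+=pu-v$, then $\nu_j\le p-1$ for all $j$. In particular, $A_{uv}(\Lambda)\in(\mathbb{Q}\cap\mathbb{Z}_p)[\Lambda]$, so $A_{uv}(\Lambda)$ can be reduced modulo $p$.
   Context: ${\bf a}_j^+=({\bf a}_j,1)\in\mathbb{N}^{n+2}$. $\mu\ge0$ is defined by $\lceil(n+1)/d\rceil=\mu+1$. $U_{\min}$ is the set of $u=(u_0,\dots,u_{n+1})\in\mathbb{N}^{n+2}$ with $\sum_{i=0}^nu_i=du_{n+1}$, $u_i>0$ for all $i$, and $u_{n+1}=\mu+1$. For $u,v\in U_{\min}$, $$A_{uv}(\Lambda)=(-1)^{\mu+1}\sum_{\nu\in\mathbb{N}^N,\ \sum_j\nu_j{\bf a}_j^+=pu-v}\frac{\Lambda_1^{\nu_1}\cdots\Lambda_N^{\nu_N}}{\nu_1!\cdots\nu_N!}\in\mathbb{Q}[\Lambda_1,\dots,\Lambda_N].$$ *)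

theory Defs
  imports Complex_Main "HOL-Computational_Algebra.Primes"
begin

(* Points of N^(n+1) / N^(n+2) / N^N are functions nat => nat, only the relevant
   coordinates (0..n, 0..n+1, 1..N respectively) matter. *)

definition aplus :: "nat \<Rightarrow> (nat \<Rightarrow> nat \<Rightarrow> nat) \<Rightarrow> nat \<Rightarrow> nat \<Rightarrow> nat" where
  "aplus n a j i = (if i = n + 1 then 1 else a j i)"

definition mu :: "nat \<Rightarrow> nat \<Rightarrow> nat" where
  "mu n d = nat \<lceil>real (n + 1) / real d\<rceil> - 1"

definition U_min :: "nat \<Rightarrow> nat \<Rightarrow> (nat \<Rightarrow> nat) set" where
  "U_min n d = {u. (\<Sum>i\<le>n. u i) = d * u (n + 1) \<and> (\<forall>i\<le>n + 1. u i > 0)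
                  \<and> u (n + 1) = mu n d + 1}"

definition solves :: "nat \<Rightarrow> nat \<Rightarrow> (nat \<Rightarrow> nat \<Rightarrow> nat) \<Rightarrow> nat \<Rightarrow> (nat \<Rightarrow> nat) \<Rightarrow> (nat \<Rightarrow> nat) \<Rightarrow> (nat \<Rightarrow> nat) \<Rightarrow> bool" where
  "solves n p a N u v \<nu> \<longleftrightarrow>
     (\<forall>i\<le>n + 1. int (\<Sum>j=1..N. \<nu> j * aplus n a j i) = int p * int (u i) - int (v i))"

(* The polynomial A_uv(Lambda) in Q[Lambda_1..Lambda_N], represented by its coefficient
   function: the coefficient of the monomial Lambda^nu (nu supported in {1..N}). *)
definition A_coeff :: "nat \<Rightarrow> nat \<Rightarrow> nat \<Rightarrow> (nat \<Rightarrow> nat \<Rightarrow> nat) \<Rightarrow> nat \<Rightarrow> (nat \<Rightarrow> nat) \<Rightarrow> (nat \<Rightarrow> nat) \<Rightarrow> (nat \<Rightarrow> nat) \<Rightarrow> rat" where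
  "A_coeff n d p a N u v \<nu> =
     (if (\<forall>j. j \<notin> {1..N} \<longrightarrow> \<nu> j = 0) \<and> solves n p a N u v \<nu>
      then (-1) ^ (mu n d + 1) / of_nat (\<Prod>j=1..N. fact (\<nu> j))
      else 0)"

definition p_integral :: "nat \<Rightarrow> rat \<Rightarrow> bool" where
  "p_integral p r \<longleftrightarrow> coprime (int p) (snd (quotient_of r))"

end

theory Submission
  imports Defs
begin

text \<open>If some \<open>\<nu>\<^sub>j \<ge> p\<close>, then \<open>p a\<^sub>j\<^sup>+ \<le> p u - v < p u\<close> coordinatewise, so
  \<open>a\<^sub>j\<^sup>+ < u\<close>, i.e. \<open>a\<^sub>j\<^sub>i + 1 \<le> u\<^sub>i\<close> for \<open>i \<le> n\<close>. Summing over \<open>i \<le> n\<close> gives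
  \<open>d + n + 1 \<le> d (\<mu> + 1)\<close>, contradicting \<open>d \<mu> < n + 1\<close>, which is the defining property of
  \<open>\<mu>\<close>. Hence every \<open>\<nu>\<^sub>j < p\<close>, so \<open>p\<close> does not divide \<open>\<Prod> \<nu>\<^sub>j!\<close>, the denominator of the
  coefficient of \<open>\<Lambda>\<^sup>\<nu>\<close> in \<open>A\<^sub>u\<^sub>v\<close>.\<close>

lemma quotient_of_denom_dvd:
  fixes k m :: int
  assumes "m > 0"
  shows "snd (quotient_of (of_int k / of_int m)) dvd m"
proof -
  obtain a b where q: "quotient_of (of_int k / of_int m) = (a, b)" by fastforce
  have "b > 0" using quotient_of_denom_pos[OF q] .
  moreover have "(of_int k / of_int m :: rat) = of_int a / of_int b"
    using quotient_of_div[OF q] .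
  ultimately have "(of_int (k * b) :: rat) = of_int (a * m)"
    using assms by (simp add: field_simps)
  then have "b dvd a * m" by (metis dvd_triv_right of_int_eq_iff)
  then have "b dvd m"
    using quotient_of_coprime[OF q] by (metis coprime_commute coprime_dvd_mult_right_iff)
  then show ?thesis using q by simp
qed

lemma p_integral_int_div:
  fixes k m :: int
  assumes "m > 0" and "coprime (int p) m"
  shows "p_integral p (of_int k / of_int m)"
  unfolding p_integral_def
  using assms coprime_divisors[OF dvd_refl quotient_of_denom_dvd] by blast

lemma prime_not_dvd_prod_fact:
  fixes p :: nat and f :: "'a \<Rightarrow> nat"
  assumes "prime p" and "finite A" and "\<forall>j\<in>A. f j < p"
  shows "\<not> p dvd (\<Prod>j\<in>A. fact (f j))"
proof
  assume "p dvd (\<Prod>j\<in>A. fact (f j))"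
  then obtain j where "j \<in> A" "p dvd fact (f j)"
    by (metis prime_dvd_prod_iff assms(1,2))
  then have "p \<le> f j" using prime_dvd_fact_iff[OF assms(1)] by simp
  moreover have "f j < p" using assms(3) \<open>j \<in> A\<close> by blast
  ultimately show False by simp
qed

lemma mult_mu_less:
  assumes "d > 0"
  shows "d * mu n d < n + 1"
proof -
  define x where "x = real (n + 1) / real d"
  have "x > 0" using assms by (simp add: x_def)
  then have "nat \<lceil>x\<rceil> \<ge> 1" by linarith
  then have "real (mu n d) = of_int \<lceil>x\<rceil> - 1"
    unfolding mu_def x_def[symmetric] by (simp add: of_nat_diff)
  also have "\<dots> < x" by linarith
  finally have "real d * real (mu n d) < real (n + 1)"
    using assms unfolding x_def by (simp add: field_simps)
  then show ?thesis by (metis of_nat_less_iff of_nat_mult)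
qed

lemma aplus_less_if_solves:
  assumes "solves n p a N u v \<nu>" and "v \<in> U_min n d"
    and "j \<in> {1..N}" and "p > 0" and "\<nu> j \<ge> p" and "i \<le> n + 1"
  shows "aplus n a j i < u i"
proof -
  have "p * aplus n a j i \<le> \<nu> j * aplus n a j i" using assms(5) by simp
  also have "\<dots> \<le> (\<Sum>j=1..N. \<nu> j * aplus n a j i)"
    using assms(3) by (intro member_le_sum) auto
  finally have "int (p * aplus n a j i) \<le> int p * int (u i) - int (v i)"
    using assms(1,6) unfolding solves_def by (metis of_nat_le_iff)
  moreover have "v i > 0" using assms(2,6) unfolding U_min_def by auto
  ultimately have "int p * int (aplus n a j i) < int p * int (u i)" by simp
  then show ?thesis using assms(4) by (simp add: mult_less_cancel_left)
qed

lemma solves_exponent_less: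
  assumes "prime p" and "d > 0"
    and "\<forall>j\<in>{1..N}. (\<Sum>i\<le>n. a j i) = d"
    and "u \<in> U_min n d" and "v \<in> U_min n d"
    and "solves n p a N u v \<nu>" and "j \<in> {1..N}"
  shows "\<nu> j < p"
proof (rule ccontr)
  assume "\<not> \<nu> j < p"
  then have "a j i + 1 \<le> u i" if "i \<le> n" for i
    using aplus_less_if_solves[OF assms(6,5,7) prime_gt_0_nat[OF assms(1)], of i] that
    by (simp add: aplus_def)
  then have "(\<Sum>i\<le>n. a j i + 1) \<le> (\<Sum>i\<le>n. u i)" by (intro sum_mono) auto
  moreover have "(\<Sum>i\<le>n. a j i + 1) = (\<Sum>i\<le>n. a j i) + (\<Sum>i\<le>n. 1)"
    by (rule sum.distrib)
  ultimately have "d + (n + 1) \<le> (\<Sum>i\<le>n. u i)"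
    using assms(3,7) by simp
  then have "d + (n + 1) \<le> d * (mu n d + 1)"
    using assms(4) unfolding U_min_def by simp
  then show False using mult_mu_less[OF assms(2), of n] by simp
qed

lemma A_coeff_p_integral:
  assumes "prime p" and "\<And>\<nu> j. solves n p a N u v \<nu> \<Longrightarrow> j \<in> {1..N} \<Longrightarrow> \<nu> j < p"
  shows "p_integral p (A_coeff n d p a N u v \<nu>)"
proof (cases "solves n p a N u v \<nu>")
  case True
  define m where "m = (\<Prod>j=1..N. fact (\<nu> j) :: nat)"
  have "\<not> p dvd m"
    unfolding m_def using prime_not_dvd_prod_fact assms True by blast
  then have "coprime (int p) (int m)"
    using assms(1) by (simp add: prime_imp_coprime_nat)
  moreover have "int m > 0" unfolding m_def by (simp add: prod_pos)
  ultimately have "p_integral p (of_int ((-1) ^ (mu n d + 1)) / of_int (int m))"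
    by (intro p_integral_int_div)
  then show ?thesis unfolding A_coeff_def m_def by (simp add: p_integral_def)
next
  case False
  then show ?thesis by (simp add: A_coeff_def p_integral_def)
qed

theorem lemma1p3:
  fixes p n d N :: nat and a :: "nat \<Rightarrow> nat \<Rightarrow> nat"
  assumes "prime p" and "n \<ge> 1" and "d \<ge> 2"
    and "\<forall>j\<in>{1..N}. (\<Sum>i\<le>n. a j i) = d"
    and "u \<in> U_min n d" and "v \<in> U_min n d"
  shows "(\<forall>\<nu>. solves n p a N u v \<nu> \<longrightarrow> (\<forall>j\<in>{1..N}. \<nu> j \<le> p - 1))
         \<and> (\<forall>\<nu>. p_integral p (A_coeff n d p a N u v \<nu>))"
proof -
  have "\<nu> j < p" if "solves n p a N u v \<nu>" and "j \<in> {1..N}" for \<nu> j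
    using solves_exponent_less[OF assms(1) _ assms(4-6) that] assms(3) by simp
  then show ?thesis
    using A_coeff_p_integral[OF assms(1)] by fastforce
qed

end
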